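(* Let $A$ be a general metric space. (a) If $\mathcal F$ is a weakly flat filter on $A$ then $M^-(\mathcal F)$ is a $\mathcal P_1$-flat left module; if $\mathcal F$ is flat then $M^-(\mathcal F)$ is $\mathcal P_2$-flat. (b) If $M$ is a $\mathcal P_1$-flat left module then $\mathcal F(M)$ is a weakly flat filter on $A$ (with filter basis $\{\Gamma(M)(\epsilon):\epsilon>0\}$); if $M$ is $\mathcal P_2$-flat then $\mathcal F(M)$ is flat. (c) Both assignments are monotone: $\mathcal F_1\supseteq\mathcal F_2$ implies $M^-(\mathcal F_1)\Rightarrow M^-(\mathcal F_2)$, and $M_1\Rightarrow M_2$ implies $\mathcal F(M_1)\supseteq\mathcal F(M_2)$. (d) For every weakly flat filter $\mathcal F$ and every left module $M$: $\mathcal F\supseteq\mathcal F(M)$ iff $M^-(\mathcal F)\Rightarrow M$. (e) For every $\mathcal P_1$-flat left module $M$, $M^-(\mathcal F(M))=M$. Consequently, with $\mathrm{WFil}(A)$ (resp. $\mathrm{FFil}(A)$) the preorder of weakly flat (resp. flat) filters ordered by reverse inclusion, $\mathcal F\mapsto M^-(\mathcal F)$ is a reflector $\mathrm{WFil}(A)\to\mathrm{Flat}_{\mathcal P_1}(A)_0$ (resp. $\mathrm{FFil}(A)\to\mathrm{Flat}_{\mathcal P_2}(A)_0$) whose right adjoint $M\mapsto\mathcal F(M)$ is full (and injective).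
   Context: $\bar{\mathbb R}_+=[0,\infty]$ is the symmetric monoidal closed category with an arrow $x\to y$ iff $x\ge y$, tensor $+$ ($x+\infty=\infty$), unit $0$, internal hom $[x,y]=\max(y-x,0)$ for finite $x,y$, $[x,\infty]=\infty$ for $x<\infty$, $[\infty,y]=0$; $\inf\emptyset=\infty$, $\sup\emptyset=0$. A general metric space $A$ is a set with $A(-,-):A\times A\to[0,\infty]$ such that $A(x,x)=0$ and $A(x,z)\le A(x,y)+A(y,z)$ (no symmetry or separation assumed). A left module on $A$ is a map $M:A\to[0,\infty]$ with $M(x)\le M(y)+A(x,y)$ for all $x,y$; a right module is $N:A\to[0,\infty]$ with $N(y)\le A(x,y)+N(x)$. For left modules, $M\Rightarrow M'$ means $M(x)\ge M'(x)$ for all $x$. A left module $M$ is $\mathcal P_1$-flat iff (F1) $\inf_x M(x)=0$ and (F3) for every $v\in[0,\infty]$ and every right module $N$, $\inf_x(M(x)+[v,N(x)])=[v,\inf_x(M(x)+N(x))]$; $M$ is $\mathcal P_2$-flat iff (F3) holds and (F2) for every finite (possibly empty) family $(N_i)_{i\in I}$ of right modules, $\inf_x(M(x)+\max_i N_i(x))=\max_i\inf_x(M(x)+N_i(x))$ (max of the empty family is $0$). (These are the specialisations of enriched $\mathcal P_1$-/$\mathcal P_2$-flatness, $\mathcal P_1$ = weights on the empty or unit category, $\mathcal P_2$ = weights on categories with finitely many objects.) $\mathrm{Flat}_{\mathcal P_k}(A)_0$ is the preorder of $\mathcal P_k$-flat left modules under $\Rightarrow$. A filter on $A$ is a nonempty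 set of nonempty subsets closed under finite intersections and supersets. For $t:A\to[0,\infty]$, $\lim^+_{\mathcal F}t=\inf_{f\in\mathcal F}\sup_{x\in f}t(x)$ and $\lim^-_{\mathcal F}t=\sup_{f\in\mathcal F}\inf_{x\in f}t(x)$. $M^-(\mathcal F)$ is the left module $x\mapsto\lim^-_{y\in\mathcal F}A(x,y)$. $\mathcal F$ is weakly flat iff $\lim^+_{\mathcal F}M^-(\mathcal F)=0$, equivalently: for every $\epsilon>0$ there is $f\in\mathcal F$ such that for all $x\in f$ and all $g\in\mathcal F$ there is $y\in g$ with $A(x,y)\le\epsilon$. $\mathcal F$ is flat iff for every $\epsilon>0$ there is $f\in\mathcal F$ such that for every finite family $x_1,\dots,x_n\in f$ and every $g\in\mathcal F$ there is $y\in g$ with $A(x_i,y)\le\epsilon$ for all $i$. For a left module $M$, $\Gamma(M)(\epsilon)=\{x\in A: M(x)\le\epsilon\}$ and $\mathcal F(M)$ is the set of subsets of $A$ containing some $\Gamma(M)(\epsilon)$ with $\epsilon>0$. *)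

theory Defs
  imports "HOL-Library.Extended_Nonnegative_Real"
begin

text \<open>Values in [0,infinity] are modelled by ennreal. The carrier of the general
metric space is the whole type 'a; the distance is A :: 'a => 'a => ennreal.\<close>

definition hom :: "ennreal \<Rightarrow> ennreal \<Rightarrow> ennreal" where
  "hom x y = (if x = top then 0 else if y = top then top else y - x)"

definition gmetric :: "('a \<Rightarrow> 'a \<Rightarrow> ennreal) \<Rightarrow> bool" where
  "gmetric A \<longleftrightarrow> (\<forall>x. A x x = 0) \<and> (\<forall>x y z. A x z \<le> A x y + A y z)"

definition left_module :: "('a \<Rightarrow> 'a \<Rightarrow> ennreal) \<Rightarrow> ('a \<Rightarrow> ennreal) \<Rightarrow> bool" where
  "left_module A M \<longleftrightarrow> (\<forall>x y. M x \<le> M y + A x y)"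

definition right_module :: "('a \<Rightarrow> 'a \<Rightarrow> ennreal) \<Rightarrow> ('a \<Rightarrow> ennreal) \<Rightarrow> bool" where
  "right_module A N \<longleftrightarrow> (\<forall>x y. N y \<le> A x y + N x)"

definition mimp :: "('a \<Rightarrow> ennreal) \<Rightarrow> ('a \<Rightarrow> ennreal) \<Rightarrow> bool" where
  "mimp M M' \<longleftrightarrow> (\<forall>x. M' x \<le> M x)"

definition flatF3 :: "('a \<Rightarrow> 'a \<Rightarrow> ennreal) \<Rightarrow> ('a \<Rightarrow> ennreal) \<Rightarrow> bool" where
  "flatF3 A M \<longleftrightarrow> (\<forall>v N. right_module A N \<longrightarrow>
      (INF x. M x + hom v (N x)) = hom v (INF x. M x + N x))"

definition flatF2 :: "('a \<Rightarrow> 'a \<Rightarrow> ennreal) \<Rightarrow> ('a \<Rightarrow> ennreal) \<Rightarrow> bool" where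
  "flatF2 A M \<longleftrightarrow> (\<forall>(I::nat set) (N::nat \<Rightarrow> 'a \<Rightarrow> ennreal). finite I \<longrightarrow>
      (\<forall>i\<in>I. right_module A (N i)) \<longrightarrow>
      (INF x. M x + (SUP i\<in>I. N i x)) = (SUP i\<in>I. INF x. M x + N i x))"

definition P1_flat :: "('a \<Rightarrow> 'a \<Rightarrow> ennreal) \<Rightarrow> ('a \<Rightarrow> ennreal) \<Rightarrow> bool" where
  "P1_flat A M \<longleftrightarrow> left_module A M \<and> (INF x. M x) = 0 \<and> flatF3 A M"

definition P2_flat :: "('a \<Rightarrow> 'a \<Rightarrow> ennreal) \<Rightarrow> ('a \<Rightarrow> ennreal) \<Rightarrow> bool" where
  "P2_flat A M \<longleftrightarrow> left_module A M \<and> flatF3 A M \<and> flatF2 A M"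

definition is_filter_on :: "'a set set \<Rightarrow> bool" where
  "is_filter_on F \<longleftrightarrow> F \<noteq> {} \<and> (\<forall>f\<in>F. f \<noteq> {})
     \<and> (\<forall>f\<in>F. \<forall>g\<in>F. f \<inter> g \<in> F) \<and> (\<forall>f\<in>F. \<forall>g. f \<subseteq> g \<longrightarrow> g \<in> F)"

definition lim_plus :: "'a set set \<Rightarrow> ('a \<Rightarrow> ennreal) \<Rightarrow> ennreal" where
  "lim_plus F t = (INF f\<in>F. SUP x\<in>f. t x)"

definition lim_minus :: "'a set set \<Rightarrow> ('a \<Rightarrow> ennreal) \<Rightarrow> ennreal" where
  "lim_minus F t = (SUP f\<in>F. INF x\<in>f. t x)"

definition Mminus :: "('a \<Rightarrow> 'a \<Rightarrow> ennreal) \<Rightarrow> 'a set set \<Rightarrow> 'a \<Rightarrow> ennreal" where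
  "Mminus A F x = lim_minus F (\<lambda>y. A x y)"

definition weakly_flat :: "('a \<Rightarrow> 'a \<Rightarrow> ennreal) \<Rightarrow> 'a set set \<Rightarrow> bool" where
  "weakly_flat A F \<longleftrightarrow> is_filter_on F \<and> lim_plus F (Mminus A F) = 0"

definition flat_filter :: "('a \<Rightarrow> 'a \<Rightarrow> ennreal) \<Rightarrow> 'a set set \<Rightarrow> bool" where
  "flat_filter A F \<longleftrightarrow> is_filter_on F \<and>
     (\<forall>\<epsilon>::ennreal. \<epsilon> > 0 \<longrightarrow> (\<exists>f\<in>F. \<forall>S. finite S \<and> S \<subseteq> f \<longrightarrow>
        (\<forall>g\<in>F. \<exists>y\<in>g. \<forall>x\<in>S. A x y \<le> \<epsilon>)))"

definition Gamma :: "('a \<Rightarrow> ennreal) \<Rightarrow> ennreal \<Rightarrow> 'a set" where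
  "Gamma M \<epsilon> = {x. M x \<le> \<epsilon>}"

definition FM :: "('a \<Rightarrow> ennreal) \<Rightarrow> 'a set set" where
  "FM M = {S. \<exists>\<epsilon>::ennreal. \<epsilon> > 0 \<and> Gamma M \<epsilon> \<subseteq> S}"

end

theory Submission
  imports Defs
begin

text \<open>
  \<open>M\<^sup>-(\<F>)(x) = lim\<^sup>-\<^sub>y A(x,y)\<close> is a left module by the triangle inequality, and weak
  flatness of \<open>\<F>\<close> says that it is eventually small along \<open>\<F>\<close>. On a set of \<open>\<F>\<close> where it is
  small, (F3) reduces to \<open>hom v\<close> commuting with infima; for a flat filter, finitely many points
  of such a set share a nearby point in every member of \<open>\<F>\<close>, which gives (F2).

  Conversely, (F3) applied to the representable right module \<open>A(x,-)\<close>, whose pairing with \<open>M\<close>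
  is \<open>M(x)\<close> by the Yoneda lemma, yields points \<open>y\<close> with \<open>M(y)\<close> arbitrarily small and
  \<open>A(x,y) \<le> M(x) + \<epsilon>\<close>. This gives \<open>M\<^sup>-(\<F>(M)) \<le> M\<close>, the other inequality being the module
  law; (F2) applied to a finite supremum of representables gives flatness of \<open>\<F>(M)\<close> in the same
  way. The adjunction and fullness then follow from \<open>M\<^sup>-(\<F>(M)) = M\<close> and monotonicity of \<open>M\<^sup>-\<close>.
\<close>

lemma ennreal_obtain_double_le:
  assumes "0 < (e::ennreal)"
  obtains r where "0 < r" "r + r \<le> e"
proof (cases e)
  case (real t)
  then have "ennreal (t/2) + ennreal (t/2) = e" "0 < ennreal (t/2)"
    using assms by (simp_all flip: ennreal_plus)
  then show ?thesis by (metis that order_refl)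
next
  case top
  then show ?thesis by (intro that[of 1]) simp_all
qed

lemma ennreal_less_add_pos: "a < top \<Longrightarrow> 0 < b \<Longrightarrow> a < a + (b::ennreal)"
  using ennreal_add_left_cancel_less[of a 0 b] by simp

lemma ennreal_const_add_INF:
  fixes f :: "'b \<Rightarrow> ennreal"
  shows "c + (INF x\<in>S. f x) = (INF x\<in>S. c + f x)"
proof (cases "S = {}")
  case False
  then show ?thesis
    using continuous_at_Inf_mono[of "\<lambda>x. c + x" "f ` S"]
      continuous_add[of "at_right (Inf (f ` S))" "\<lambda>x. c" "\<lambda>x. x"]
    by (auto simp: mono_def image_comp add_left_mono)
qed simp

lemma hom_le_iff: "hom v a \<le> w \<longleftrightarrow> a \<le> v + w"
  by (auto simp: hom_def ennreal_minus_le_iff top_unique)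

lemma le_add_hom: "a \<le> v + hom v a"
  using hom_le_iff by blast

lemma hom_mono: "a \<le> b \<Longrightarrow> hom v a \<le> hom v b"
  by (meson le_add_hom hom_le_iff order_trans)

lemma hom_eq_0_iff: "hom v a = 0 \<longleftrightarrow> a \<le> v"
  using hom_le_iff[of v a 0] by simp

lemma hom_INF:
  fixes g :: "'b \<Rightarrow> ennreal"
  assumes "S \<noteq> {}"
  shows "hom v (INF y\<in>S. g y) = (INF y\<in>S. hom v (g y))"
proof (rule antisym)
  show "hom v (INF y\<in>S. g y) \<le> (INF y\<in>S. hom v (g y))"
    by (intro INF_greatest hom_mono INF_lower)
  show "(INF y\<in>S. hom v (g y)) \<le> hom v (INF y\<in>S. g y)"
  proof (cases "v = top")
    case True
    then show ?thesis using assms by (simp add: hom_def)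
  next
    case False
    let ?w = "hom v (INF y\<in>S. g y)"
    show ?thesis
    proof (rule ennreal_le_epsilon)
      fix e :: real assume "?w < top" "0 < e"
      with False have "v + ?w < v + ?w + ennreal e"
        by (intro ennreal_less_add_pos) (simp_all add: less_top)
      then have "(INF y\<in>S. g y) < v + ?w + ennreal e"
        using le_add_hom by (rule order.strict_trans1[rotated])
      then obtain y where "y \<in> S" "g y \<le> v + (?w + ennreal e)"
        by (auto simp: INF_less_iff add.assoc less_imp_le)
      then show "(INF y\<in>S. hom v (g y)) \<le> ?w + ennreal e"
        by (meson INF_lower2 hom_le_iff)
    qed
  qed
qed

lemma hom_INF_add_le:
  fixes M N :: "'a \<Rightarrow> ennreal"
  shows "hom v (INF x. M x + N x) \<le> (INF x. M x + hom v (N x))"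
proof (rule INF_greatest)
  fix x
  have "(INF x. M x + N x) \<le> M x + (v + hom v (N x))"
    by (rule INF_lower2[of x]) (auto intro: add_left_mono le_add_hom)
  then show "hom v (INF x. M x + N x) \<le> M x + hom v (N x)"
    by (simp add: hom_le_iff ac_simps)
qed

lemma yoneda_left_module:
  assumes "gmetric A" "left_module A M"
  shows "(INF y. M y + A x y) = M x"
proof (rule antisym)
  show "(INF y. M y + A x y) \<le> M x"
    using assms(1) by (intro INF_lower2[of x]) (auto simp: gmetric_def)
  show "M x \<le> (INF y. M y + A x y)"
    using assms(2) by (auto simp: left_module_def intro!: INF_greatest)
qed

lemma right_module_dist: "gmetric A \<Longrightarrow> right_module A (A x)"
  unfolding gmetric_def right_module_def by (metis add.commute)

lemma right_module_SUP:
  assumes "\<And>i. i \<in> I \<Longrightarrow> right_module A (N i)"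
  shows "right_module A (\<lambda>y. SUP i\<in>I. N i y)"
  unfolding right_module_def
proof (intro allI SUP_least)
  fix x y i assume i: "i \<in> I"
  have "N i y \<le> A x y + N i x" using assms[OF i] by (auto simp: right_module_def)
  also have "\<dots> \<le> A x y + (SUP i\<in>I. N i x)" using i by (intro add_left_mono SUP_upper)
  finally show "N i y \<le> A x y + (SUP i\<in>I. N i x)" .
qed

lemma INF_le_lim_plus:
  assumes "is_filter_on F"
  shows "(INF x. t x) \<le> lim_plus F t"
  unfolding lim_plus_def
proof (rule INF_greatest)
  fix f assume "f \<in> F"
  then obtain x where "x \<in> f" using assms unfolding is_filter_on_def by blast
  have "(INF x. t x) \<le> t x" by (rule INF_lower) simp
  also have "\<dots> \<le> (SUP x\<in>f. t x)" using \<open>x \<in> f\<close> by (rule SUP_upper)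
  finally show "(INF x. t x) \<le> (SUP x\<in>f. t x)" .
qed

lemma lim_plus_eq_0_iff: "lim_plus F t = 0 \<longleftrightarrow> (\<forall>e>0. \<exists>f\<in>F. \<forall>x\<in>f. t x \<le> e)"
proof
  assume "lim_plus F t = 0"
  show "\<forall>e>0. \<exists>f\<in>F. \<forall>x\<in>f. t x \<le> e"
  proof (intro allI impI)
    fix e :: ennreal assume "0 < e"
    with \<open>lim_plus F t = 0\<close> have "(INF f\<in>F. SUP x\<in>f. t x) < e" by (simp add: lim_plus_def)
    then obtain f where "f \<in> F" "(SUP x\<in>f. t x) < e" by (auto simp: INF_less_iff)
    then show "\<exists>f\<in>F. \<forall>x\<in>f. t x \<le> e" by (meson SUP_upper less_imp_le order_trans)
  qed
next
  assume small: "\<forall>e>0. \<exists>f\<in>F. \<forall>x\<in>f. t x \<le> e"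
  have "lim_plus F t \<le> 0"
  proof (rule ennreal_le_epsilon)
    fix e :: real assume "0 < e"
    then have "0 < ennreal e" by simp
    with small obtain f where f: "f \<in> F" "\<forall>x\<in>f. t x \<le> ennreal e" by blast
    have "lim_plus F t \<le> (SUP x\<in>f. t x)" unfolding lim_plus_def using f(1) by (rule INF_lower)
    also have "\<dots> \<le> ennreal e" using f(2) by (intro SUP_least) blast
    finally show "lim_plus F t \<le> 0 + ennreal e" by simp
  qed
  then show "lim_plus F t = 0" by simp
qed

lemma left_module_Mminus:
  assumes "gmetric A"
  shows "left_module A (Mminus A F)"
  unfolding left_module_def
proof (intro allI)
  fix x y
  show "Mminus A F x \<le> Mminus A F y + A x y"
    unfolding Mminus_def lim_minus_def
  proof (rule SUP_least)
    fix f assume "f \<in> F"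
    have "(INF z\<in>f. A x z) \<le> (INF z\<in>f. A x y + A y z)"
      using assms unfolding gmetric_def by (intro INF_mono) blast
    also have "\<dots> = A x y + (INF z\<in>f. A y z)" by (rule ennreal_const_add_INF[symmetric])
    also have "\<dots> \<le> A x y + (SUP f\<in>F. INF z\<in>f. A y z)"
      using \<open>f \<in> F\<close> by (intro add_left_mono SUP_upper)
    finally show "(INF z\<in>f. A x z) \<le> (SUP f\<in>F. INF z\<in>f. A y z) + A x y"
      by (simp add: add.commute)
  qed
qed

lemma Mminus_mono: "F2 \<subseteq> F1 \<Longrightarrow> mimp (Mminus A F1) (Mminus A F2)"
  unfolding mimp_def Mminus_def lim_minus_def by (auto intro: SUP_subset_mono)

lemma INF_le_Mminus_add:
  assumes "f \<in> F" "right_module A N"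
  shows "(INF y\<in>f. N y) \<le> Mminus A F x + N x"
proof -
  have "(INF y\<in>f. N y) \<le> (INF y\<in>f. N x + A x y)"
    using assms(2) by (intro INF_mono) (auto simp: right_module_def add.commute)
  also have "\<dots> = N x + (INF y\<in>f. A x y)" by (rule ennreal_const_add_INF[symmetric])
  also have "\<dots> \<le> N x + Mminus A F x"
    unfolding Mminus_def lim_minus_def using assms(1) by (intro add_left_mono SUP_upper)
  finally show ?thesis by (simp add: add.commute)
qed

lemma weakly_flat_ex_Mminus_le:
  assumes "weakly_flat A F" "0 < e"
  shows "\<exists>f\<in>F. \<forall>x\<in>f. Mminus A F x \<le> e"
  using assms by (auto simp: weakly_flat_def lim_plus_eq_0_iff)

lemma weakly_flat_INF_Mminus:
  assumes "weakly_flat A F"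
  shows "(INF x. Mminus A F x) = 0"
  using INF_le_lim_plus[of F "Mminus A F"] assms by (simp add: weakly_flat_def)

lemma weakly_flat_flatF3_Mminus:
  assumes "weakly_flat A F"
  shows "flatF3 A (Mminus A F)"
  unfolding flatF3_def
proof (intro allI impI antisym)
  fix v N assume N: "right_module A N"
  let ?R = "INF x. Mminus A F x + N x"
  show "hom v ?R \<le> (INF x. Mminus A F x + hom v (N x))" by (rule hom_INF_add_le)
  show "(INF x. Mminus A F x + hom v (N x)) \<le> hom v ?R"
  proof (rule ennreal_le_epsilon)
    fix e :: real assume "0 < e"
    then obtain f where f: "f \<in> F" "\<forall>x\<in>f. Mminus A F x \<le> ennreal e"
      using weakly_flat_ex_Mminus_le[OF assms, of "ennreal e"] by auto
    have "f \<noteq> {}" using assms f(1) by (auto simp: weakly_flat_def is_filter_on_def)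
    have "(INF x. Mminus A F x + hom v (N x)) \<le> (INF x\<in>f. ennreal e + hom v (N x))"
      using f(2) by (intro INF_mono) (auto intro: add_right_mono)
    also have "\<dots> = ennreal e + hom v (INF x\<in>f. N x)"
      using \<open>f \<noteq> {}\<close> by (simp add: ennreal_const_add_INF hom_INF)
    also have "\<dots> \<le> ennreal e + hom v ?R"
      using INF_le_Mminus_add[OF f(1) N] by (intro add_left_mono hom_mono INF_greatest)
    finally show "(INF x. Mminus A F x + hom v (N x)) \<le> hom v ?R + ennreal e"
      by (simp add: add.commute)
  qed
qed

lemma P1_flat_Mminus: "gmetric A \<Longrightarrow> weakly_flat A F \<Longrightarrow> P1_flat A (Mminus A F)"
  by (simp add: P1_flat_def left_module_Mminus weakly_flat_INF_Mminus weakly_flat_flatF3_Mminus)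

lemma flat_filter_imp_weakly_flat:
  assumes "flat_filter A F"
  shows "weakly_flat A F"
  unfolding weakly_flat_def lim_plus_eq_0_iff
proof (intro conjI allI impI)
  show "is_filter_on F" using assms by (simp add: flat_filter_def)
  fix e :: ennreal assume "0 < e"
  with assms obtain f where f: "f \<in> F"
    "\<forall>S. finite S \<and> S \<subseteq> f \<longrightarrow> (\<forall>g\<in>F. \<exists>y\<in>g. \<forall>x\<in>S. A x y \<le> e)"
    by (auto simp: flat_filter_def)
  have "Mminus A F x \<le> e" if "x \<in> f" for x
    unfolding Mminus_def lim_minus_def
  proof (rule SUP_least)
    fix g assume "g \<in> F"
    with f(2)[rule_format, of "{x}" g] \<open>x \<in> f\<close> obtain y where "y \<in> g" "A x y \<le> e" by blast
    then show "(INF y\<in>g. A x y) \<le> e" by (meson INF_lower order_trans)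
  qed
  with f(1) show "\<exists>f\<in>F. \<forall>x\<in>f. Mminus A F x \<le> e" by blast
qed

lemma flat_filter_obtain_common_point:
  assumes "flat_filter A F" "0 < d" "finite I" "\<forall>i\<in>I. right_module A (N i)"
    and "\<forall>i\<in>I. (INF x. Mminus A F x + N i x) < c"
  obtains y where "Mminus A F y \<le> d" "\<forall>i\<in>I. N i y \<le> d + c"
proof -
  obtain f where f: "f \<in> F"
    "\<forall>S. finite S \<and> S \<subseteq> f \<longrightarrow> (\<forall>g\<in>F. \<exists>y\<in>g. \<forall>x\<in>S. A x y \<le> d)"
    using assms(1,2) by (auto simp: flat_filter_def)
  obtain f' where f': "f' \<in> F" "\<forall>x\<in>f'. Mminus A F x \<le> d"
    using weakly_flat_ex_Mminus_le[OF flat_filter_imp_weakly_flat[OF assms(1)] assms(2)] by blast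
  have "\<exists>x\<in>f. N i x < c" if "i \<in> I" for i
  proof -
    have "(INF x\<in>f. N i x) \<le> (INF x. Mminus A F x + N i x)"
      using INF_le_Mminus_add[OF f(1)] assms(4) that by (blast intro: INF_greatest)
    also have "\<dots> < c" using assms(5) that by blast
    finally show ?thesis by (simp add: INF_less_iff)
  qed
  then obtain xs where xs: "\<forall>i\<in>I. xs i \<in> f \<and> N i (xs i) < c" by metis
  then obtain y where y: "y \<in> f'" "\<forall>i\<in>I. A (xs i) y \<le> d"
    using f(2)[rule_format, of "xs ` I" f'] f'(1) assms(3) by auto
  have "N i y \<le> d + c" if "i \<in> I" for i
  proof -
    have "N i y \<le> A (xs i) y + N i (xs i)" using assms(4) that by (auto simp: right_module_def)
    also have "\<dots> \<le> d + c" using xs y that by (intro add_mono) auto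
    finally show ?thesis .
  qed
  then show thesis using that f'(2) y(1) by blast
qed

lemma flat_filter_flatF2_Mminus:
  assumes "flat_filter A F"
  shows "flatF2 A (Mminus A F)"
  unfolding flatF2_def
proof (intro allI impI antisym)
  fix I :: "nat set" and N assume I: "finite I" and N: "\<forall>i\<in>I. right_module A (N i)"
  let ?R = "SUP i\<in>I. INF x. Mminus A F x + N i x"
  show "?R \<le> (INF x. Mminus A F x + (SUP i\<in>I. N i x))"
  proof (intro SUP_least INF_greatest)
    fix i x assume "i \<in> I"
    then have "Mminus A F x + N i x \<le> Mminus A F x + (SUP i\<in>I. N i x)"
      by (intro add_left_mono SUP_upper)
    then show "(INF x. Mminus A F x + N i x) \<le> Mminus A F x + (SUP i\<in>I. N i x)"
      by (rule INF_lower2[OF UNIV_I])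
  qed
  show "(INF x. Mminus A F x + (SUP i\<in>I. N i x)) \<le> ?R"
  proof (rule ennreal_le_epsilon)
    fix e :: real assume "?R < top" "0 < e"
    define d where "d = ennreal (e / 3)"
    have "0 < d" using \<open>0 < e\<close> by (simp add: d_def)
    have "?R < ?R + d" using \<open>?R < top\<close> \<open>0 < d\<close> by (rule ennreal_less_add_pos)
    then have "\<forall>i\<in>I. (INF x. Mminus A F x + N i x) < ?R + d"
      by (meson SUP_upper order.strict_trans1)
    with assms \<open>0 < d\<close> I N obtain y where
      y: "Mminus A F y \<le> d" "\<forall>i\<in>I. N i y \<le> d + (?R + d)"
      by (rule flat_filter_obtain_common_point)
    have "(INF x. Mminus A F x + (SUP i\<in>I. N i x)) \<le> Mminus A F y + (SUP i\<in>I. N i y)"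
      by (rule INF_lower) simp
    also have "\<dots> \<le> d + (d + (?R + d))" using y by (intro add_mono SUP_least) auto
    also have "\<dots> = ?R + (d + d + d)" by (simp add: ac_simps)
    also have "d + d + d = ennreal e" using \<open>0 < e\<close> by (simp add: d_def flip: ennreal_plus)
    finally show "(INF x. Mminus A F x + (SUP i\<in>I. N i x)) \<le> ?R + ennreal e" .
  qed
qed

lemma P2_flat_Mminus:
  assumes "gmetric A" "flat_filter A F"
  shows "P2_flat A (Mminus A F)"
  using P1_flat_Mminus[OF assms(1) flat_filter_imp_weakly_flat[OF assms(2)]]
    flat_filter_flatF2_Mminus[OF assms(2)]
  by (simp add: P1_flat_def P2_flat_def)

lemma Gamma_in_FM: "0 < e \<Longrightarrow> Gamma M e \<in> FM M"
  by (auto simp: FM_def)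

lemma is_filter_on_FM:
  assumes "(INF x. M x) = 0"
  shows "is_filter_on (FM M)"
  unfolding is_filter_on_def
proof (intro conjI ballI allI impI)
  show "FM M \<noteq> {}" using Gamma_in_FM[of 1 M] by auto
next
  fix f assume "f \<in> FM M"
  then obtain e where e: "0 < e" "Gamma M e \<subseteq> f" by (auto simp: FM_def)
  with assms obtain x where "M x < e" by (metis INF_less_iff UNIV_I)
  then have "x \<in> Gamma M e" by (simp add: Gamma_def)
  with e show "f \<noteq> {}" by blast
next
  fix f g assume "f \<in> FM M" "g \<in> FM M"
  then obtain e1 e2 where "0 < e1" "Gamma M e1 \<subseteq> f" "0 < e2" "Gamma M e2 \<subseteq> g"
    by (auto simp: FM_def)
  then have "0 < min e1 e2" "Gamma M (min e1 e2) \<subseteq> f \<inter> g" by (auto simp: Gamma_def)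
  then show "f \<inter> g \<in> FM M" unfolding FM_def by blast
next
  fix f g assume "f \<in> FM M" "f \<subseteq> g"
  then show "g \<in> FM M" by (auto simp: FM_def)
qed

lemma Mminus_ge_if_FM_subset:
  assumes "left_module A M" "FM M \<subseteq> F"
  shows "M x \<le> Mminus A F x"
proof (rule ennreal_le_epsilon)
  fix e :: real assume "0 < e"
  let ?G = "Gamma M (ennreal e)"
  have "?G \<in> F" using assms(2) Gamma_in_FM[of "ennreal e" M] \<open>0 < e\<close> by auto
  have "M x \<le> ennreal e + A x y" if "y \<in> ?G" for y
  proof -
    have "M x \<le> M y + A x y" using assms(1) by (simp add: left_module_def)
    also have "\<dots> \<le> ennreal e + A x y" using that by (intro add_right_mono) (simp add: Gamma_def)
    finally show ?thesis .
  qed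
  then have "M x \<le> (INF y\<in>?G. ennreal e + A x y)" by (rule INF_greatest)
  also have "\<dots> = ennreal e + (INF y\<in>?G. A x y)" by (rule ennreal_const_add_INF[symmetric])
  also have "\<dots> \<le> ennreal e + Mminus A F x"
    unfolding Mminus_def lim_minus_def using \<open>?G \<in> F\<close> by (intro add_left_mono SUP_upper)
  finally show "M x \<le> Mminus A F x + ennreal e" by (simp add: add.commute)
qed

lemma flatF3_obtain_witness:
  assumes "flatF3 A M" "right_module A N" "(INF y. M y + N y) \<le> r" "0 < d"
  obtains y where "M y < d" "N y \<le> r + d"
proof -
  have "(INF y. M y + hom r (N y)) = hom r (INF y. M y + N y)"
    using assms(1,2) by (simp add: flatF3_def)
  also have "\<dots> = 0" using assms(3) by (simp add: hom_eq_0_iff)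
  finally have "(INF y. M y + hom r (N y)) < d" using assms(4) by simp
  then obtain y where y: "M y + hom r (N y) < d" by (auto simp: INF_less_iff)
  have My: "M y < d" and hom: "hom r (N y) < d" by (rule le_less_trans[OF _ y], simp)+
  have "N y \<le> r + d" using hom_le_iff less_imp_le[OF hom] by blast
  with My show thesis by (rule that)
qed

lemma Mminus_FM_le:
  assumes "gmetric A" "left_module A M" "flatF3 A M"
  shows "Mminus A (FM M) x \<le> M x"
  unfolding Mminus_def lim_minus_def
proof (rule SUP_least)
  fix S assume "S \<in> FM M"
  then obtain \<delta> where \<delta>: "0 < \<delta>" "Gamma M \<delta> \<subseteq> S" by (auto simp: FM_def)
  show "(INF y\<in>S. A x y) \<le> M x"
  proof (rule ennreal_le_epsilon)
    fix e :: real assume "0 < e"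
    then have d: "0 < min \<delta> (ennreal e)" using \<delta>(1) by simp
    have "(INF y. M y + A x y) \<le> M x" using yoneda_left_module[OF assms(1,2)] by simp
    from flatF3_obtain_witness[OF assms(3) right_module_dist[OF assms(1)] this d]
    obtain y where "M y < min \<delta> (ennreal e)" "A x y \<le> M x + min \<delta> (ennreal e)" .
    then have "y \<in> Gamma M \<delta>" by (simp add: Gamma_def less_imp_le)
    with \<delta>(2) have "y \<in> S" by blast
    then have "(INF y\<in>S. A x y) \<le> A x y" by (rule INF_lower)
    also have "\<dots> \<le> M x + min \<delta> (ennreal e)" by fact
    also have "\<dots> \<le> M x + ennreal e" by (intro add_left_mono min.cobounded2)
    finally show "(INF y\<in>S. A x y) \<le> M x + ennreal e" .
  qed
qed

lemma Mminus_FM: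
  assumes "gmetric A" "left_module A M" "flatF3 A M"
  shows "Mminus A (FM M) = M"
  by (intro ext antisym Mminus_FM_le[OF assms] Mminus_ge_if_FM_subset[OF assms(2) order_refl])

lemma weakly_flat_FM:
  assumes "gmetric A" "P1_flat A M"
  shows "weakly_flat A (FM M)"
proof -
  have M: "left_module A M" "(INF x. M x) = 0" "flatF3 A M"
    using assms(2) by (simp_all add: P1_flat_def)
  have "lim_plus (FM M) M = 0"
    unfolding lim_plus_eq_0_iff
  proof (intro allI impI)
    fix e :: ennreal assume "0 < e"
    show "\<exists>f\<in>FM M. \<forall>x\<in>f. M x \<le> e"
      by (intro bexI[OF _ Gamma_in_FM[OF \<open>0 < e\<close>]]) (simp add: Gamma_def)
  qed
  then show ?thesis
    using is_filter_on_FM[OF M(2)] Mminus_FM[OF assms(1) M(1,3)] by (simp add: weakly_flat_def)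
qed

lemma P2_flat_imp_P1_flat:
  assumes "P2_flat A M"
  shows "P1_flat A M"
proof -
  \<comment> \<open>(F1) is the instance of (F2) for the empty family\<close>
  have "(INF x. M x + (SUP i\<in>{}. 0)) = (SUP i\<in>({}::nat set). INF x. M x + 0)"
    using assms[unfolded P2_flat_def flatF2_def, THEN conjunct2, THEN conjunct2, rule_format,
        of "{}" "\<lambda>_ _. 0"] by simp
  then show ?thesis using assms by (simp add: P1_flat_def P2_flat_def bot_ennreal)
qed

lemma flatF2_INF_add_SUP_dist:
  assumes "gmetric A" "left_module A M" "flatF2 A M" "finite S"
  shows "(INF y. M y + (SUP x\<in>S. A x y)) = (SUP x\<in>S. M x)"
proof -
  \<comment> \<open>\<open>flatF2\<close> only speaks about \<open>nat\<close>-indexed families, so enumerate \<open>S\<close>\<close>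
  obtain n and h :: "nat \<Rightarrow> 'a" where S: "S = h ` {i. i < n}"
    using assms(4) by (auto simp: finite_conv_nat_seg_image)
  have "(INF y. M y + (SUP i\<in>{i. i < n}. A (h i) y)) = (SUP i\<in>{i. i < n}. INF y. M y + A (h i) y)"
    using assms(3)[unfolded flatF2_def, rule_format, of "{i. i < n}" "\<lambda>i. A (h i)"]
      right_module_dist[OF assms(1)] by simp
  then show ?thesis by (simp add: S image_comp yoneda_left_module[OF assms(1,2)])
qed

lemma flat_filter_FM:
  assumes "gmetric A" "P2_flat A M"
  shows "flat_filter A (FM M)"
  unfolding flat_filter_def
proof (intro conjI allI impI)
  have M: "left_module A M" "flatF3 A M" "flatF2 A M" "(INF x. M x) = 0"
    using assms(2) P2_flat_imp_P1_flat by (auto simp: P2_flat_def P1_flat_def)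
  then show "is_filter_on (FM M)" by (intro is_filter_on_FM)
  fix \<epsilon> :: ennreal assume "0 < \<epsilon>"
  then obtain r where r: "0 < r" "r + r \<le> \<epsilon>" by (rule ennreal_obtain_double_le)
  have "\<exists>y\<in>g. \<forall>x\<in>S. A x y \<le> \<epsilon>"
    if S: "finite S" "S \<subseteq> Gamma M r" and "g \<in> FM M" for S g
  proof -
    obtain \<delta> where \<delta>: "0 < \<delta>" "Gamma M \<delta> \<subseteq> g" using \<open>g \<in> FM M\<close> by (auto simp: FM_def)
    have "(INF y. M y + (SUP x\<in>S. A x y)) = (SUP x\<in>S. M x)"
      by (rule flatF2_INF_add_SUP_dist[OF assms(1) M(1,3) S(1)])
    also have "\<dots> \<le> r" using S(2) by (intro SUP_least) (auto simp: Gamma_def)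
    finally have le: "(INF y. M y + (SUP x\<in>S. A x y)) \<le> r" .
    have d: "0 < min \<delta> r" using \<delta>(1) r(1) by simp
    from flatF3_obtain_witness[OF M(2) right_module_SUP[of S A A, OF right_module_dist[OF assms(1)]] le d]
    obtain y where y: "M y < min \<delta> r" "(SUP x\<in>S. A x y) \<le> r + min \<delta> r" .
    then have "y \<in> Gamma M \<delta>" by (simp add: Gamma_def less_imp_le)
    with \<delta>(2) have "y \<in> g" by blast
    moreover have "A x y \<le> \<epsilon>" if "x \<in> S" for x
    proof -
      have "A x y \<le> (SUP x\<in>S. A x y)" using that by (rule SUP_upper)
      also have "\<dots> \<le> r + min \<delta> r" by (fact y(2))
      also have "\<dots> \<le> r + r" by (intro add_left_mono min.cobounded2)
      finally show ?thesis using r(2) by (rule order_trans)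
    qed
    ultimately show ?thesis by blast
  qed
  with Gamma_in_FM[OF r(1)]
  show "\<exists>f\<in>FM M. \<forall>S. finite S \<and> S \<subseteq> f \<longrightarrow> (\<forall>g\<in>FM M. \<exists>y\<in>g. \<forall>x\<in>S. A x y \<le> \<epsilon>)"
    by blast
qed

lemma Gamma_mono:
  assumes "mimp M1 M2"
  shows "Gamma M1 e \<subseteq> Gamma M2 e"
proof
  fix x assume "x \<in> Gamma M1 e"
  then have "M1 x \<le> e" by (simp add: Gamma_def)
  with assms have "M2 x \<le> e" unfolding mimp_def by (blast intro: order_trans)
  then show "x \<in> Gamma M2 e" by (simp add: Gamma_def)
qed

lemma FM_mono:
  assumes "mimp M1 M2"
  shows "FM M2 \<subseteq> FM M1"
proof
  fix S assume "S \<in> FM M2"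
  then obtain e where "0 < e" "Gamma M2 e \<subseteq> S" by (auto simp: FM_def)
  with Gamma_mono[OF assms, of e] show "S \<in> FM M1" unfolding FM_def by blast
qed

lemma FM_subset_iff_mimp:
  assumes "weakly_flat A F" "left_module A M"
  shows "FM M \<subseteq> F \<longleftrightarrow> mimp (Mminus A F) M"
proof
  assume "FM M \<subseteq> F"
  then show "mimp (Mminus A F) M"
    using Mminus_ge_if_FM_subset[OF assms(2)] by (simp add: mimp_def)
next
  assume m: "mimp (Mminus A F) M"
  show "FM M \<subseteq> F"
  proof
    fix S assume "S \<in> FM M"
    then obtain \<delta> where \<delta>: "0 < \<delta>" "Gamma M \<delta> \<subseteq> S" by (auto simp: FM_def)
    obtain f where f: "f \<in> F" "\<forall>x\<in>f. Mminus A F x \<le> \<delta>"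
      using weakly_flat_ex_Mminus_le[OF assms(1) \<delta>(1)] by blast
    have "f \<subseteq> Gamma (Mminus A F) \<delta>" using f(2) by (auto simp: Gamma_def)
    also have "\<dots> \<subseteq> S" using Gamma_mono[OF m] \<delta>(2) by blast
    finally show "S \<in> F" using f(1) assms(1) unfolding weakly_flat_def is_filter_on_def by blast
  qed
qed

lemma mimp_if_FM_subset:
  assumes "gmetric A" "P1_flat A M1" "P1_flat A M2" "FM M2 \<subseteq> FM M1"
  shows "mimp M1 M2"
proof -
  have "Mminus A (FM M1) = M1" "Mminus A (FM M2) = M2"
    using assms(2,3) Mminus_FM[OF assms(1)] by (simp_all add: P1_flat_def)
  with Mminus_mono[OF assms(4), of A] show ?thesis by simp
qed

theorem mainTheorem8:
  fixes A :: "'a \<Rightarrow> 'a \<Rightarrow> ennreal"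
  assumes "gmetric A"
  shows
    \<comment> \<open>(a)\<close>
    "(\<forall>F. weakly_flat A F \<longrightarrow> P1_flat A (Mminus A F))
   \<and> (\<forall>F. flat_filter A F \<longrightarrow> P2_flat A (Mminus A F))
    \<comment> \<open>(b)\<close>
   \<and> (\<forall>M. P1_flat A M \<longrightarrow> weakly_flat A (FM M))
   \<and> (\<forall>M. P2_flat A M \<longrightarrow> flat_filter A (FM M))
    \<comment> \<open>(c)\<close>
   \<and> (\<forall>F1 F2. is_filter_on F1 \<and> is_filter_on F2 \<and> F2 \<subseteq> F1
        \<longrightarrow> mimp (Mminus A F1) (Mminus A F2))
   \<and> (\<forall>M1 M2. left_module A M1 \<and> left_module A M2 \<and> mimp M1 M2
        \<longrightarrow> FM M2 \<subseteq> FM M1)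
    \<comment> \<open>(d)\<close>
   \<and> (\<forall>F M. weakly_flat A F \<and> left_module A M
        \<longrightarrow> (FM M \<subseteq> F \<longleftrightarrow> mimp (Mminus A F) M))
    \<comment> \<open>(e)\<close>
   \<and> (\<forall>M. P1_flat A M \<longrightarrow> Mminus A (FM M) = M)
    \<comment> \<open>consequence: the right adjoint M |-> F(M) is full and injective\<close>
   \<and> (\<forall>M1 M2. P1_flat A M1 \<and> P1_flat A M2 \<and> FM M2 \<subseteq> FM M1 \<longrightarrow> mimp M1 M2)
   \<and> (\<forall>M1 M2. P2_flat A M1 \<and> P2_flat A M2 \<and> FM M2 \<subseteq> FM M1 \<longrightarrow> mimp M1 M2)
   \<and> (\<forall>M1 M2. P1_flat A M1 \<and> P1_flat A M2 \<and> FM M1 = FM M2 \<longrightarrow> M1 = M2)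
   \<and> (\<forall>M1 M2. P2_flat A M1 \<and> P2_flat A M2 \<and> FM M1 = FM M2 \<longrightarrow> M1 = M2)"
proof -
  have reflection: "Mminus A (FM M) = M" if "P1_flat A M" for M
    using Mminus_FM[OF assms] that by (simp add: P1_flat_def)
  have injective: "M1 = M2" if "P1_flat A M1" "P1_flat A M2" "FM M1 = FM M2" for M1 M2
    using that by (metis reflection)
  show ?thesis
    by (intro conjI allI impI; (elim conjE)?)
      (simp_all add: P1_flat_Mminus[OF assms] P2_flat_Mminus[OF assms] weakly_flat_FM[OF assms]
        flat_filter_FM[OF assms] Mminus_mono FM_mono FM_subset_iff_mimp reflection
        mimp_if_FM_subset[OF assms] injective P2_flat_imp_P1_flat)
qed

end
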